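(* For every dimension $d\ge3$ and every integer $k\ge3$ there exists a $d$-dimensional lattice polytope $P\subseteq\mathbb{R}^d$ with $\mathrm{width}(P)=k$ such that for every integer $t\ge2$ there is a lattice point in $tP$ which is not a sum of $t$ lattice points of $P$. (For $d=3$ one can take $P=\mathrm{conv}(\{(3,0,-1),(0,2,-1)\}\cup[0,k]^3)$, and for $d>3$ its product with $[0,k]^{d-3}$.)
   Context: A lattice polytope is the convex hull of finitely many points of $\mathbb{Z}^d$. $\mathrm{width}(P)=\min_{u\in(\mathbb{Z}^d)^*\setminus\{0\}}\max_{x,y\in P}|u(x)-u(y)|$. *)

theory Defs
  imports "HOL-Analysis.Analysis"
begin

definition lattice_points :: "(real ^ 'n) set" where
  "lattice_points = {x. \<forall>i. x $ i \<in> \<int>}"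

definition lattice_polytope :: "(real ^ 'n) set \<Rightarrow> bool" where
  "lattice_polytope P \<longleftrightarrow>
     (\<exists>S. finite S \<and> S \<subseteq> lattice_points \<and> P = convex hull S)"

definition lattice_width :: "(real ^ 'n) set \<Rightarrow> real" where
  "lattice_width P =
     Inf ((\<lambda>u. Sup {\<bar>u \<bullet> x - u \<bullet> y\<bar> | x y. x \<in> P \<and> y \<in> P})
          ` (lattice_points - {0}))"

end

theory Submission
  imports Defs
begin

text \<open>Take \<open>P\<close> to be the convex hull of \<open>0\<close>, the points \<open>k e\<^sub>i\<close>, and
  \<open>a = 3e\<^sub>1 - e\<^sub>3\<close>, \<open>b = 2e\<^sub>2 - e\<^sub>3\<close>. The lattice points of \<open>P\<close> lie in
  \<open>x\<^sub>3 \<ge> -1\<close>, and those with \<open>x\<^sub>3 = -1\<close> lie on the segment \<open>[a, b]\<close>; hence the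
  functional \<open>w(x) = 2x\<^sub>1 + 3x\<^sub>2 + 6x\<^sub>3\<close>, which is nonnegative on \<open>P\<close>, takes on
  lattice points of \<open>P\<close> only the values \<open>0\<close> and values \<open>\<ge> 2\<close>. So no sum of
  lattice points of \<open>P\<close> has \<open>w = 1\<close>, whereas for every \<open>t \<ge> 2\<close> the lattice point
  \<open>(2, 2t - 3, 1 - t)\<close> of \<open>tP\<close> does. The width is \<open>k\<close>: \<open>P\<close> lies in the slab
  \<open>0 \<le> x\<^sub>1 \<le> k\<close> and contains \<open>0\<close> and every \<open>k e\<^sub>i\<close>.
  (Coordinates \<open>1, 2, 3\<close> stand for any three distinct coordinates \<open>i1, i2, i3\<close>.)\<close>

lemma convex_hull_halfspace_ge:
  fixes S :: "'a::real_inner set"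
  assumes "\<And>s. s \<in> S \<Longrightarrow> c \<le> v \<bullet> s" and "x \<in> convex hull S"
  shows "c \<le> v \<bullet> x"
  using hull_minimal[of S "{x. c \<le> v \<bullet> x}" convex] convex_halfspace_ge assms by blast

lemma convex_combination_with_zero_mem:
  fixes C :: "'a::real_vector set"
  assumes "convex C" "0 \<in> C" "x \<in> C" "y \<in> C" "z \<in> C"
    "0 \<le> u" "0 \<le> v" "0 \<le> w" "u + v + w \<le> 1"
  shows "u *\<^sub>R x + v *\<^sub>R y + w *\<^sub>R z \<in> C"
proof -
  have "(\<Sum>j\<in>{0,1,2,3::nat}. [u, v, w, 1 - u - v - w] ! j *\<^sub>R [x, y, z, 0] ! j) \<in> C"
    by (rule convex_sum) (use assms in auto)
  then show ?thesis by (simp add: add.assoc)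
qed

lemma sum_zero_or_ge_two_ne_one:
  fixes g :: "'a \<Rightarrow> 'b::linordered_idom"
  assumes "finite I" and "\<And>i. i \<in> I \<Longrightarrow> g i = 0 \<or> 2 \<le> g i"
  shows "(\<Sum>i\<in>I. g i) \<noteq> 1"
proof (cases "\<forall>i\<in>I. g i = 0")
  case False
  then obtain j where "j \<in> I" "2 \<le> g j" using assms(2) by blast
  moreover have "g j \<le> (\<Sum>i\<in>I. g i)"
    by (rule member_le_sum) (use assms \<open>j \<in> I\<close> in force)+
  ultimately show ?thesis by auto
qed simp

lemma inner_eq_one_not_sum:
  fixes v z :: "'a::real_inner" and t :: nat
  assumes "\<And>y. y \<in> A \<Longrightarrow> v \<bullet> y = 0 \<or> 2 \<le> v \<bullet> y" and "v \<bullet> z = 1"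
  shows "\<not> (\<exists>f. (\<forall>i<t. f i \<in> A) \<and> z = (\<Sum>i<t. f i))"
proof
  assume "\<exists>f. (\<forall>i<t. f i \<in> A) \<and> z = (\<Sum>i<t. f i)"
  then obtain f where "\<forall>i<t. f i \<in> A" and "z = (\<Sum>i<t. f i)" by blast
  then have "(\<Sum>i<t. v \<bullet> f i) \<noteq> 1"
    using assms(1) by (intro sum_zero_or_ge_two_ne_one) simp_all
  with \<open>z = (\<Sum>i<t. f i)\<close> assms(2) show False by (simp add: inner_sum_right)
qed

lemma two_three_six_ne_one:
  fixes m1 m2 m3 :: int
  assumes "0 \<le> m1" "0 \<le> m2" "-1 \<le> m3" "m3 = -1 \<Longrightarrow> 2 * m1 + 3 * m2 \<le> 6"
  shows "2 * m1 + 3 * m2 + 6 * m3 \<noteq> 1"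
proof (cases "m3 = -1")
  case False
  with assms(1-3) show ?thesis by presburger
qed (use assms in simp)

definition width_along :: "'a::real_inner set \<Rightarrow> 'a \<Rightarrow> real" where
  "width_along P u = Sup {\<bar>u \<bullet> x - u \<bullet> y\<bar> | x y. x \<in> P \<and> y \<in> P}"

lemma lattice_width_eq_Inf_width_along:
  "lattice_width P = Inf (width_along P ` (lattice_points - {0}))"
  by (simp add: lattice_width_def width_along_def)

lemma width_along_ge:
  fixes P :: "'a::real_inner set"
  assumes "bounded P" "x \<in> P" "y \<in> P"
  shows "\<bar>u \<bullet> x - u \<bullet> y\<bar> \<le> width_along P u"
proof -
  obtain B where B: "\<And>x. x \<in> P \<Longrightarrow> norm x \<le> B"
    using assms(1) by (auto simp: bounded_iff)
  have "bdd_above {\<bar>u \<bullet> x - u \<bullet> y\<bar> | x y. x \<in> P \<and> y \<in> P}"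
  proof (rule bdd_aboveI, clarify)
    fix x y assume "x \<in> P" "y \<in> P"
    have "\<bar>u \<bullet> x - u \<bullet> y\<bar> \<le> norm u * norm x + norm u * norm y"
      using Cauchy_Schwarz_ineq2[of u x] Cauchy_Schwarz_ineq2[of u y] by linarith
    also have "\<dots> \<le> norm u * B + norm u * B"
      by (intro add_mono mult_left_mono B \<open>x \<in> P\<close> \<open>y \<in> P\<close> norm_ge_zero)
    finally show "\<bar>u \<bullet> x - u \<bullet> y\<bar> \<le> norm u * B + norm u * B" .
  qed
  then show ?thesis
    unfolding width_along_def by (rule cSup_upper[rotated]) (use assms in blast)
qed

lemma width_along_le:
  assumes "P \<noteq> {}" and "\<And>x y. x \<in> P \<Longrightarrow> y \<in> P \<Longrightarrow> \<bar>u \<bullet> x - u \<bullet> y\<bar> \<le> c"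
  shows "width_along P u \<le> c"
proof -
  obtain x where "x \<in> P" using assms(1) by blast
  then have "{\<bar>u \<bullet> x - u \<bullet> y\<bar> | x y. x \<in> P \<and> y \<in> P} \<noteq> {}" by blast
  then show ?thesis
    unfolding width_along_def by (rule cSup_least) (use assms(2) in blast)
qed

lemma lattice_width_eq_slab:
  fixes P :: "(real ^ 'n) set"
  assumes "bounded P" "0 \<in> P" "\<And>i. axis i c \<in> P"
    and slab: "\<And>x. x \<in> P \<Longrightarrow> 0 \<le> x $ j \<and> x $ j \<le> c"
  shows "lattice_width P = c"
  unfolding lattice_width_eq_Inf_width_along
proof (rule cInf_eq_minimum)
  have "width_along P (axis j 1) \<le> c"
  proof (rule width_along_le)
    fix x y assume "x \<in> P" "y \<in> P"
    then show "\<bar>axis j 1 \<bullet> x - axis j 1 \<bullet> y\<bar> \<le> c"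
      using slab[of x] slab[of y] by (simp add: inner_axis' abs_le_iff)
  qed (use assms(2) in blast)
  moreover have "c \<le> width_along P (axis j 1)"
    using width_along_ge[OF assms(1) assms(3)[of j] assms(2), where u = "axis j 1"]
      slab[OF assms(3)[of j]]
    by (simp add: inner_axis')
  ultimately have "width_along P (axis j 1) = c" by simp
  moreover have "axis j 1 \<in> lattice_points - {0}"
    by (auto simp: lattice_points_def axis_def vec_eq_iff)
  ultimately show "c \<in> width_along P ` (lattice_points - {0})" by force
next
  fix r assume "r \<in> width_along P ` (lattice_points - {0})"
  then obtain u where u: "u \<in> lattice_points" "u \<noteq> 0" and r: "r = width_along P u" by blast
  then obtain i where "u $ i \<noteq> 0" by (auto simp: vec_eq_iff)
  moreover have "u $ i \<in> \<int>" using u by (simp add: lattice_points_def)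
  ultimately have "1 \<le> \<bar>u $ i\<bar>" by (rule Ints_nonzero_abs_ge1[rotated])
  moreover have "0 \<le> c" using slab[OF assms(3)[of j]] by simp
  ultimately have "c \<le> \<bar>u \<bullet> axis i c - u \<bullet> 0\<bar>"
    by (simp add: inner_axis abs_mult mult_le_cancel_right1)
  also have "\<dots> \<le> r" unfolding r by (rule width_along_ge[OF assms(1) assms(3) assms(2)])
  finally show "c \<le> r" .
qed

lemma aff_dim_eq_CARD_if_axes:
  fixes P :: "(real ^ 'n) set"
  assumes "0 \<in> P" "\<And>i. axis i c \<in> P" "c \<noteq> 0"
  shows "aff_dim P = int CARD('n)"
proof -
  have "axis i 1 \<in> span P" for i
  proof -
    have "axis i 1 = (1 / c) *\<^sub>R axis i c"
      using assms(3) by (simp add: vec_eq_iff axis_def)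
    then show ?thesis by (metis assms(2) span_base span_mul)
  qed
  then have "Basis \<subseteq> span P" by (auto simp: Basis_vec_def)
  then have "span P = UNIV" using span_mono[of Basis "span P"] by (simp add: span_span top_unique)
  then have "affine hull P = UNIV" by (simp add: affine_hull_span_0 assms(1) hull_inc)
  then show ?thesis using aff_dim_eq_full[of P] by simp
qed

lemma three_distinct_elements:
  assumes "3 \<le> CARD('a)"
  obtains i1 i2 i3 :: "'a::finite" where "i1 \<noteq> i2" "i1 \<noteq> i3" "i2 \<noteq> i3"
proof -
  obtain T :: "'a set" where "card T = 3" "finite T"
    using obtain_subset_with_card_n[OF assms] by metis
  then show ?thesis using that by (auto simp: card_Suc_eq numeral_3_eq_3)
qed

locale corner_polytope =
  fixes i1 i2 i3 :: "'n::finite" and k :: int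
  assumes distinct: "i1 \<noteq> i2" "i1 \<noteq> i3" "i2 \<noteq> i3"
    and k_ge_3: "3 \<le> k"
begin

definition vert_a :: "real ^ 'n" where
  "vert_a = (\<chi> i. if i = i1 then 3 else if i = i3 then -1 else 0)"

definition vert_b :: "real ^ 'n" where
  "vert_b = (\<chi> i. if i = i2 then 2 else if i = i3 then -1 else 0)"

definition corners :: "(real ^ 'n) set" where
  "corners = {0, vert_a, vert_b} \<union> range (\<lambda>i. axis i (of_int k))"

definition polytope :: "(real ^ 'n) set" where
  "polytope = convex hull corners"

definition weight :: "real ^ 'n" where
  "weight = axis i1 2 + axis i2 3 + axis i3 6"

lemma lattice_polytope_polytope: "lattice_polytope polytope"
proof -
  have "corners \<subseteq> lattice_points"
    by (auto simp: corners_def vert_a_def vert_b_def lattice_points_def axis_def)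
  moreover have "finite corners" by (simp add: corners_def)
  ultimately show ?thesis unfolding lattice_polytope_def polytope_def by blast
qed

lemma zero_in_polytope: "0 \<in> polytope"
  and axis_in_polytope: "axis i (of_int k) \<in> polytope"
  and vert_a_in_polytope: "vert_a \<in> polytope"
  and vert_b_in_polytope: "vert_b \<in> polytope"
  using hull_subset[of corners convex] by (auto simp: polytope_def corners_def)

lemma aff_dim_polytope: "aff_dim polytope = int CARD('n)"
  by (rule aff_dim_eq_CARD_if_axes[OF zero_in_polytope axis_in_polytope]) (use k_ge_3 in simp)

lemma polytope_inequalities:
  assumes "x \<in> polytope"
  shows "0 \<le> x $ i1" "x $ i1 \<le> k" "0 \<le> x $ i2" "-1 \<le> x $ i3" "0 \<le> weight \<bullet> x"
    and "2 * x $ i1 + 3 * x $ i2 \<le> 6 + 3 * k * (x $ i3 + 1)"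
proof -
  have "- 6 - 3 * of_int k \<le> 3 * of_int k * (of_int k :: real)"
    using k_ge_3 by (smt (verit) of_int_le_iff mult_nonneg_nonneg of_int_0_le_iff)
  note facts = distinct k_ge_3 this
  note defs = corners_def vert_a_def vert_b_def weight_def inner_add_left inner_diff_left
    inner_axis' axis_def[where x = "of_int k"]
  have "0 \<le> axis i1 1 \<bullet> x" "- k \<le> axis i1 (-1) \<bullet> x" "0 \<le> axis i2 1 \<bullet> x"
    "-1 \<le> axis i3 1 \<bullet> x" "0 \<le> weight \<bullet> x"
    "- (6 + 3 * k) \<le> (axis i3 (3 * k) - axis i1 2 - axis i2 3) \<bullet> x"
    \<comment> \<open>the last one cuts the layer \<open>x $ i3 = -1\<close> of the polytope down to the segment
      from \<open>vert_a\<close> to \<open>vert_b\<close>\<close>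
    by (rule convex_hull_halfspace_ge[OF _ assms[unfolded polytope_def]];
        use facts in \<open>auto simp: defs\<close>)+
  then show "0 \<le> x $ i1" "x $ i1 \<le> k" "0 \<le> x $ i2" "-1 \<le> x $ i3" "0 \<le> weight \<bullet> x"
    and "2 * x $ i1 + 3 * x $ i2 \<le> 6 + 3 * k * (x $ i3 + 1)"
    by (simp_all add: inner_diff_left inner_axis' algebra_simps)
qed

lemma weight_lattice_gap:
  assumes "y \<in> polytope \<inter> lattice_points"
  shows "weight \<bullet> y = 0 \<or> 2 \<le> weight \<bullet> y"
proof -
  have y: "y \<in> polytope" "\<forall>i. y $ i \<in> \<int>" using assms by (auto simp: lattice_points_def)
  then obtain m1 m2 m3 where m: "y $ i1 = of_int m1" "y $ i2 = of_int m2" "y $ i3 = of_int m3"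
    by (metis Ints_cases)
  have w: "weight \<bullet> y = of_int (2 * m1 + 3 * m2 + 6 * m3)"
    using m by (simp add: weight_def inner_add_left inner_axis')
  note ineq = polytope_inequalities[OF y(1), unfolded m]
  have "0 \<le> m1" "0 \<le> m2" "-1 \<le> m3" "0 \<le> 2 * m1 + 3 * m2 + 6 * m3"
    using ineq(1,3,4,5) w by simp_all
  moreover have "2 * m1 + 3 * m2 \<le> 6" if "m3 = -1"
    using ineq(6) that by simp
  ultimately have "2 * m1 + 3 * m2 + 6 * m3 = 0 \<or> 2 \<le> 2 * m1 + 3 * m2 + 6 * m3"
    using two_three_six_ne_one by fastforce
  then show ?thesis unfolding w by linarith
qed

definition witness :: "nat \<Rightarrow> real ^ 'n" where
  "witness t = (\<chi> j. if j = i1 then 2 else if j = i2 then 2 * real t - 3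
                     else if j = i3 then 1 - real t else 0)"

lemma witness_lattice: "witness t \<in> lattice_points"
  by (auto simp: lattice_points_def witness_def)

lemma weight_witness: "weight \<bullet> witness t = 1"
  using distinct by (simp add: weight_def witness_def inner_add_left inner_axis')

lemma witness_in_dilation:
  assumes "2 \<le> t"
  shows "witness t \<in> (\<lambda>x. real t *\<^sub>R x) ` polytope"
proof
  define T where "T = real t"
  have T: "2 \<le> T" "(0::real) < of_int k" using assms k_ge_3 by (simp_all add: T_def)
  define p where "p = (1 / (2 * T)) *\<^sub>R vert_a + ((2 * T - 3) / (2 * T)) *\<^sub>R vert_b
    + (1 / (2 * T * of_int k)) *\<^sub>R axis i1 (of_int k)"
  show "p \<in> polytope"
    unfolding p_def
  proof (rule convex_combination_with_zero_mem)
    show "convex polytope" by (simp add: polytope_def)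
    have "1 / (2 * T * of_int k) \<le> 1 / (2 * T)" using T by (simp add: field_simps)
    then show "1 / (2 * T) + (2 * T - 3) / (2 * T) + 1 / (2 * T * of_int k) \<le> 1"
      using T by (simp add: field_simps)
  qed (use T in \<open>simp_all add: zero_in_polytope vert_a_in_polytope vert_b_in_polytope
      axis_in_polytope\<close>)
  show "witness t = real t *\<^sub>R p"
    using distinct T by (simp add: vec_eq_iff witness_def p_def vert_a_def vert_b_def axis_def
        T_def [symmetric] field_simps)
qed

lemma witness_not_sum:
  "\<not> (\<exists>f. (\<forall>i<t. f i \<in> polytope \<inter> lattice_points) \<and> witness t = (\<Sum>i<t. f i))"
  using weight_lattice_gap weight_witness by (rule inner_eq_one_not_sum)

lemma lattice_width_polytope: "lattice_width polytope = of_int k"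
proof (rule lattice_width_eq_slab[where j = i1])
  show "bounded polytope"
    unfolding polytope_def corners_def
    by (intro compact_imp_bounded compact_convex_hull finite_imp_compact) simp
qed (use polytope_inequalities(1,2) in \<open>simp_all add: zero_in_polytope axis_in_polytope\<close>)

end

theorem proposition2p6:
  fixes k :: int
  assumes "CARD('n) \<ge> 3" and "k \<ge> 3"
  shows "\<exists>P :: (real ^ 'n) set.
           lattice_polytope P \<and> aff_dim P = int CARD('n) \<and>
           lattice_width P = real_of_int k \<and>
           (\<forall>t::nat. t \<ge> 2 \<longrightarrow>
              (\<exists>z \<in> lattice_points \<inter> ((\<lambda>x. real t *\<^sub>R x) ` P).
                 \<not> (\<exists>f :: nat \<Rightarrow> real ^ 'n.
                        (\<forall>i<t. f i \<in> P \<inter> lattice_points) \<and>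
                        z = (\<Sum>i<t. f i))))"
proof -
  obtain i1 i2 i3 :: 'n where "i1 \<noteq> i2" "i1 \<noteq> i3" "i2 \<noteq> i3"
    using three_distinct_elements assms(1) by blast
  then interpret corner_polytope i1 i2 i3 k
    using assms(2) by unfold_locales
  have "\<forall>t\<ge>2. \<exists>z \<in> lattice_points \<inter> (\<lambda>x. real t *\<^sub>R x) ` polytope.
          \<not> (\<exists>f. (\<forall>i<t. f i \<in> polytope \<inter> lattice_points) \<and> z = (\<Sum>i<t. f i))"
    using witness_lattice witness_in_dilation witness_not_sum by blast
  then show ?thesis
    using lattice_polytope_polytope aff_dim_polytope lattice_width_polytope by blast
qed

end
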